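(* Let $P_1,P_2$ be probability distributions on a finite set $A$ with $P_1(a)>0$ and $P_2(a)>0$ for all $a\in A$. For a sequence of decision regions $C_n\subset A^n$, let $\alpha_n=P_1^n(C_n^c)$ and $\beta_n=P_2^n(C_n)$. Then: (i) for all $n\geq1$, $\beta_n\geq e^{-n\varepsilon(\alpha_n)}$; (ii) if $\alpha_n\to0$, then $\liminf_{n\to\infty}\frac1n\log\beta_n\geq -H(P_1\|P_2)$; (iii) there exists a sequence of decision regions $C_n$ with $\alpha_n\to0$ and $\frac1n\log\beta_n\to -H(P_1\|P_2)$ as $n\to\infty$.
   Context: $\rho$ is the Hamming distortion on $A$: $\rho(x,y)=1$ if $x\ne y$ and $0$ if $x=y$, and $\rho_n(x_1^n,y_1^n)=\frac1n\sum_{i=1}^n\rho(x_i,y_i)$. $H(\mu\|\nu)=\sum_s\mu(s)\log\frac{\mu(s)}{\nu(s)}$ (natural log). For a probability measure $Q$ on $A$ and $D\ge0$, ${\cal M}(P_1,Q,D)$ is the set of probability measures $W$ on $A\times A$ with first marginal $P_1$, second marginal $Q$ and $E_W[\rho(X,Y)]\le D$; $I(P_1,Q,D)=\inf_{W\in{\cal M}(P_1,Q,D)}H(W\|P_1\times Q)$ ($+\infty$ if empty); $R(D;P_1,P_2)=\inf_Q\{I(P_1,Q,D)+E_Q[\log P_2(Y)]\}$ over probability distributions $Q$ on $A$. The error exponent is $\varepsilon(\alpha)=-R(\alpha;P_1,P_2)$ for $\alpha\in[0,1]$ (so that $\varepsilon(0)=H(P_1\|P_2)$). $P_i^n$ denotes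 the product distribution on $A^n$. *)

theory Defs
  imports "HOL-Analysis.Analysis"
begin

definition is_distr :: "('b::finite \<Rightarrow> real) \<Rightarrow> bool" where
  "is_distr Q \<longleftrightarrow> (\<forall>x. 0 \<le> Q x) \<and> (\<Sum>x\<in>UNIV. Q x) = 1"

definition rho :: "'a \<Rightarrow> 'a \<Rightarrow> real" where
  "rho x y = (if x \<noteq> y then 1 else 0)"

definition relent :: "('b::finite \<Rightarrow> real) \<Rightarrow> ('b \<Rightarrow> real) \<Rightarrow> ereal" where
  "relent mu nu =
     (if \<exists>s. mu s > 0 \<and> nu s = 0 then \<infinity>
      else ereal (\<Sum>s\<in>UNIV. if mu s = 0 then 0 else mu s * ln (mu s / nu s)))"

definition couplings :: "('a::finite \<Rightarrow> real) \<Rightarrow> ('a \<Rightarrow> real) \<Rightarrow> real \<Rightarrow> ('a \<times> 'a \<Rightarrow> real) set" where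
  "couplings P1 Q D = {W. is_distr W \<and>
      (\<forall>x. (\<Sum>y\<in>UNIV. W (x, y)) = P1 x) \<and>
      (\<forall>y. (\<Sum>x\<in>UNIV. W (x, y)) = Q y) \<and>
      (\<Sum>s\<in>UNIV. W s * rho (fst s) (snd s)) \<le> D}"

text \<open>I(P1,Q,D); Inf of the empty set of ereals is +infinity.\<close>
definition Ifun :: "('a::finite \<Rightarrow> real) \<Rightarrow> ('a \<Rightarrow> real) \<Rightarrow> real \<Rightarrow> ereal" where
  "Ifun P1 Q D = Inf ((\<lambda>W. relent W (\<lambda>(x, y). P1 x * Q y)) ` couplings P1 Q D)"

definition Rfun :: "real \<Rightarrow> ('a::finite \<Rightarrow> real) \<Rightarrow> ('a \<Rightarrow> real) \<Rightarrow> ereal" where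
  "Rfun D P1 P2 = Inf ((\<lambda>Q. Ifun P1 Q D + ereal (\<Sum>y\<in>UNIV. Q y * ln (P2 y))) ` {Q. is_distr Q})"

definition err_exp :: "('a::finite \<Rightarrow> real) \<Rightarrow> ('a \<Rightarrow> real) \<Rightarrow> real \<Rightarrow> ereal" where
  "err_exp P1 P2 \<alpha> = - Rfun \<alpha> P1 P2"

text \<open>Product measure P^n of a set of words of length n (words = lists).\<close>
definition prod_meas :: "('a \<Rightarrow> real) \<Rightarrow> 'a list set \<Rightarrow> real" where
  "prod_meas P S = (\<Sum>xs\<in>S. prod_list (map P xs))"

definition words :: "nat \<Rightarrow> 'a list set" where
  "words n = {xs. length xs = n}"

end

theory Submission
  imports Defs "HOL-Real_Asymp.Real_Asymp"
begin

(* (i) is a change of measure. Map every word outside C_n to a fixed word of C_n and let W be the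
   P1^n-average of the joint type of (x, phi x); W couples P1 with its second marginal Q at
   Hamming distortion at most alpha_n. The weights P2^n(phi x) * prod_i W(x_i, y_i) / Q(y_i),
   y = phi x, have total mass at most beta_n, so Gibbs' inequality against P1^n yields
   n (H(W || P1 x Q) + E_Q log P2) <= log beta_n, and the left-hand side dominates
   n R(alpha_n; P1, P2) = -n eps(alpha_n).
   (ii) and (iii) are Stein's lemma: by Chebyshev's inequality the log-likelihood ratio of a word
   is n H(P1 || P2) + O(n^(3/4)) off a set of P1^n-probability O(n^(-1/2)), and on these typical
   words P2^n = exp(-n (H(P1 || P2) + o(1))) P1^n. *)

section \<open>Words and product measures\<close>

lemma finite_words [simp]: "finite (words n :: 'a::finite list set)"
proof -
  have "words n = {xs. set xs \<subseteq> (UNIV :: 'a set) \<and> length xs = n}"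
    by (auto simp: words_def)
  then show ?thesis
    using finite_lists_length_eq[of "UNIV :: 'a set" n] by simp
qed

lemma words_not_empty [simp]: "words n \<noteq> {}"
proof -
  have "replicate n undefined \<in> words n"
    by (simp add: words_def)
  then show ?thesis by blast
qed

lemma words_0 [simp]: "words 0 = {[]}"
  by (auto simp: words_def)

lemma sum_words_Suc:
  "(\<Sum>x\<in>words (Suc n). f x) = (\<Sum>a\<in>UNIV. \<Sum>x\<in>words n. f (a # x))"
proof -
  have words: "words (Suc n) = (\<lambda>(a, x). a # x) ` (UNIV \<times> words n)"
    by (auto simp: words_def image_iff length_Suc_conv)
  have "inj_on (\<lambda>(a, x). a # x) (UNIV \<times> words n)"
    by (auto simp: inj_on_def)
  then have "(\<Sum>x\<in>words (Suc n). f x) = (\<Sum>p\<in>UNIV \<times> words n. f ((\<lambda>(a, x). a # x) p))"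
    unfolding words by (rule sum.reindex[unfolded comp_def])
  then show ?thesis
    by (simp add: sum.cartesian_product split_def)
qed

lemma sum_words_prod_list:
  fixes P :: "'a::finite \<Rightarrow> 'b::comm_semiring_1"
  shows "(\<Sum>x\<in>words n. prod_list (map P x)) = (\<Sum>a\<in>UNIV. P a) ^ n"
  by (induction n) (simp_all add: sum_words_Suc flip: sum_distrib_left sum_distrib_right)

lemma sum_words_prod_list_zip:
  fixes g :: "'a::finite \<Rightarrow> 'b \<Rightarrow> 'c::comm_semiring_1"
  assumes "length y = n"
  shows "(\<Sum>x\<in>words n. prod_list (map (\<lambda>(a, b). g a b) (zip x y)))
       = prod_list (map (\<lambda>b. \<Sum>a\<in>UNIV. g a b) y)"
  using assms
proof (induction y arbitrary: n)
  case (Cons b y)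
  then obtain m where "n = Suc m" "length y = m" by auto
  with Cons.IH show ?case
    by (simp add: sum_words_Suc flip: sum_distrib_left sum_distrib_right)
qed simp

lemma sum_words_prod_list_sum_list:
  fixes P h :: "'a::finite \<Rightarrow> real"
  assumes "(\<Sum>a\<in>UNIV. P a) = 1"
  shows "(\<Sum>x\<in>words n. prod_list (map P x) * sum_list (map h x)) = real n * (\<Sum>a\<in>UNIV. P a * h a)"
proof (induction n)
  case (Suc n)
  have "(\<Sum>x\<in>words (Suc n). prod_list (map P x) * sum_list (map h x))
      = (\<Sum>a\<in>UNIV. P a * h a * (\<Sum>x\<in>words n. prod_list (map P x))
                   + P a * (\<Sum>x\<in>words n. prod_list (map P x) * sum_list (map h x)))"
    by (simp add: sum_words_Suc sum.distrib sum_distrib_left algebra_simps)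
  also have "\<dots> = (\<Sum>a\<in>UNIV. P a * h a) + real n * (\<Sum>a\<in>UNIV. P a * h a)"
    using Suc assms
    by (simp add: sum_words_prod_list sum.distrib flip: sum_distrib_left sum_distrib_right)
  finally show ?case by (simp add: algebra_simps)
qed simp

lemma sum_words_prod_list_centered_sq:
  fixes P f :: "'a::finite \<Rightarrow> real"
  assumes P: "(\<Sum>a\<in>UNIV. P a) = 1"
  defines "m \<equiv> \<Sum>a\<in>UNIV. P a * f a"
  shows "(\<Sum>x\<in>words n. prod_list (map P x) * (sum_list (map f x) - real n * m)\<^sup>2)
       = real n * (\<Sum>a\<in>UNIV. P a * (f a - m)\<^sup>2)"
proof (induction n)
  case (Suc n)
  define p where "p x = prod_list (map P x)" for x
  define T where "T x = sum_list (map f x) - real n * m" for x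
  define V where "V = (\<Sum>a\<in>UNIV. P a * (f a - m)\<^sup>2)"
  have IH: "(\<Sum>x\<in>words n. p x * (T x)\<^sup>2) = real n * V"
    using Suc by (simp add: p_def T_def V_def)
  have total: "(\<Sum>x\<in>words n. p x) = 1"
    using P by (simp add: p_def sum_words_prod_list)
  have centered: "(\<Sum>x\<in>words n. p x * T x) = 0"
    using sum_words_prod_list_sum_list[OF P, where n=n and h=f] total
    by (simp add: p_def T_def m_def right_diff_distrib sum_subtractf flip: sum_distrib_right)
  have "(\<Sum>x\<in>words (Suc n). prod_list (map P x) * (sum_list (map f x) - real (Suc n) * m)\<^sup>2)
      = (\<Sum>a\<in>UNIV. \<Sum>x\<in>words n. P a * (f a - m)\<^sup>2 * p x + 2 * P a * (f a - m) * (p x * T x)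
                                  + P a * (p x * (T x)\<^sup>2))"
    by (simp add: sum_words_Suc p_def T_def power2_eq_square algebra_simps)
  also have "\<dots> = (\<Sum>a\<in>UNIV. P a * (f a - m)\<^sup>2 + P a * (real n * V))"
    by (simp add: sum.distrib total centered IH flip: sum_distrib_left)
  also have "\<dots> = V + real n * V"
    by (simp only: sum.distrib flip: V_def) (simp add: P flip: sum_distrib_right)
  finally show ?case by (simp add: V_def algebra_simps)
qed simp

lemma prod_meas_words:
  "is_distr P \<Longrightarrow> prod_meas P (words n) = 1"
  by (simp add: prod_meas_def sum_words_prod_list is_distr_def)

lemma prod_meas_nonneg: "(\<And>a. 0 \<le> P a) \<Longrightarrow> 0 \<le> prod_meas P S"
  unfolding prod_meas_def by (intro sum_nonneg prod_list_nonneg) auto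

lemma prod_meas_mono:
  "(\<And>a. 0 \<le> P a) \<Longrightarrow> A \<subseteq> B \<Longrightarrow> finite B \<Longrightarrow> prod_meas P A \<le> prod_meas P B"
  unfolding prod_meas_def by (intro sum_mono2 prod_list_nonneg) auto

lemma prod_meas_Un_le:
  assumes "\<And>a. 0 \<le> P a" "finite A" "finite B"
  shows "prod_meas P (A \<union> B) \<le> prod_meas P A + prod_meas P B"
proof -
  have "prod_meas P (A \<union> B) + prod_meas P (A \<inter> B) = prod_meas P A + prod_meas P B"
    unfolding prod_meas_def by (rule sum.union_inter[OF assms(2,3)])
  moreover have "0 \<le> prod_meas P (A \<inter> B)"
    using assms(1) by (rule prod_meas_nonneg)
  ultimately show ?thesis
    by linarith
qed

lemma prod_meas_Diff:
  "finite B \<Longrightarrow> A \<subseteq> B \<Longrightarrow> prod_meas P (B - A) = prod_meas P B - prod_meas P A"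
  unfolding prod_meas_def by (simp add: sum_diff)

lemma prod_list_map_pos: "(\<And>v. v \<in> set xs \<Longrightarrow> 0 < (f v :: real)) \<Longrightarrow> 0 < prod_list (map f xs)"
  by (induction xs) auto

lemma ln_prod_list_map:
  "(\<And>v. v \<in> set xs \<Longrightarrow> 0 < (f v :: real)) \<Longrightarrow> ln (prod_list (map f xs)) = sum_list (map (\<lambda>v. ln (f v)) xs)"
  by (induction xs) (simp_all add: ln_mult_pos prod_list_map_pos)

lemma gibbs_inequality:
  fixes p r :: "'b \<Rightarrow> real"
  assumes "finite S" "sum p S = 1" "\<And>x. x \<in> S \<Longrightarrow> 0 < p x" "\<And>x. x \<in> S \<Longrightarrow> 0 < r x"
  shows "(\<Sum>x\<in>S. p x * ln (r x / p x)) \<le> ln (sum r S)"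
proof -
  define s where "s = sum r S"
  have "S \<noteq> {}" using assms(2) by auto
  then have s: "0 < s" unfolding s_def using assms(1,4) by (intro sum_pos) auto
  have "p x * ln (r x / p x) = p x * ln (r x / (s * p x)) + p x * ln s" if "x \<in> S" for x
    using assms(3,4)[OF that] s by (simp add: ln_div ln_mult_pos algebra_simps)
  then have "(\<Sum>x\<in>S. p x * ln (r x / p x)) - ln s = (\<Sum>x\<in>S. p x * ln (r x / (s * p x)))"
    using assms(2) by (simp add: sum.distrib flip: sum_distrib_right)
  also have "\<dots> \<le> (\<Sum>x\<in>S. p x * (r x / (s * p x) - 1))"
    using assms s by (intro sum_mono mult_left_mono ln_le_minus_one) (auto intro: less_imp_le)
  also have "\<dots> = (\<Sum>x\<in>S. r x / s - p x)"
  proof (intro sum.cong refl)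
    fix x
    assume "x \<in> S"
    then have "p x \<noteq> 0" using assms(3) by force
    then show "p x * (r x / (s * p x) - 1) = r x / s - p x"
      using s by (simp add: field_simps)
  qed
  also have "\<dots> = 0"
    using assms(2) s by (simp add: s_def sum_subtractf flip: sum_divide_distrib)
  finally show ?thesis by (simp add: s_def)
qed

section \<open>Averaged joint types\<close>

lemma sum_list_map_eq_sum_count_UNIV:
  fixes g :: "'a::finite \<Rightarrow> real"
  shows "sum_list (map g zs) = (\<Sum>v\<in>UNIV. real (count_list zs v) * g v)"
proof (induction zs)
  case (Cons z zs)
  have "(\<Sum>v\<in>UNIV. real (count_list (z # zs) v) * g v)
      = (\<Sum>v\<in>UNIV. (if v = z then g v else 0) + real (count_list zs v) * g v)"
    by (intro sum.cong) (auto simp: algebra_simps)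
  with Cons show ?case by (simp add: sum.distrib)
qed simp

lemma sum_UNIV_pair: "(\<Sum>v\<in>UNIV. f v) = (\<Sum>a\<in>UNIV. \<Sum>b\<in>UNIV. f (a, b))"
  by (simp add: sum.cartesian_product flip: UNIV_Times_UNIV)

definition pair_type :: "('a::finite \<Rightarrow> real) \<Rightarrow> nat \<Rightarrow> ('a list \<Rightarrow> 'a list) \<Rightarrow> 'a \<times> 'a \<Rightarrow> real" where
  "pair_type P n \<phi> v = (\<Sum>x\<in>words n. prod_list (map P x) * real (count_list (zip x (\<phi> x)) v)) / real n"

definition snd_marginal :: "('a::finite \<times> 'b \<Rightarrow> real) \<Rightarrow> 'b \<Rightarrow> real" where
  "snd_marginal W b = (\<Sum>a\<in>UNIV. W (a, b))"

definition snd_conditional :: "('a::finite \<times> 'b \<Rightarrow> real) \<Rightarrow> 'a \<Rightarrow> 'b \<Rightarrow> real" where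
  "snd_conditional W a b = W (a, b) / snd_marginal W b"

lemma sum_words_sum_list_zip:
  fixes P :: "'a::finite \<Rightarrow> real"
  assumes "0 < n"
  shows "(\<Sum>x\<in>words n. prod_list (map P x) * sum_list (map g (zip x (\<phi> x))))
       = real n * (\<Sum>v\<in>UNIV. pair_type P n \<phi> v * g v)"
proof -
  have "(\<Sum>x\<in>words n. prod_list (map P x) * sum_list (map g (zip x (\<phi> x))))
      = (\<Sum>x\<in>words n. \<Sum>v\<in>UNIV. prod_list (map P x) * real (count_list (zip x (\<phi> x)) v) * g v)"
    by (simp add: sum_list_map_eq_sum_count_UNIV sum_distrib_left mult.assoc)
  also have "\<dots> = (\<Sum>v\<in>UNIV. real n * pair_type P n \<phi> v * g v)"
    using assms by (subst sum.swap) (simp add: pair_type_def sum_distrib_right)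
  also have "\<dots> = real n * (\<Sum>v\<in>UNIV. pair_type P n \<phi> v * g v)"
    by (simp add: sum_distrib_left mult.assoc)
  finally show ?thesis .
qed

lemma pair_type_nonneg: "(\<And>a. 0 \<le> P a) \<Longrightarrow> 0 \<le> pair_type P n \<phi> v"
  unfolding pair_type_def by (intro divide_nonneg_nonneg sum_nonneg mult_nonneg_nonneg prod_list_nonneg) auto

lemma pair_type_pos:
  assumes "\<And>a. 0 < P a" "0 < n" "x \<in> words n" "v \<in> set (zip x (\<phi> x))"
  shows "0 < pair_type P n \<phi> v"
proof -
  have "0 < prod_list (map P x)"
    using assms(1) by (simp add: prod_list_map_pos)
  moreover have "count_list (zip x (\<phi> x)) v \<noteq> 0"
    using assms(4) by (simp add: count_list_0_iff)
  ultimately have "0 < prod_list (map P x) * real (count_list (zip x (\<phi> x)) v)"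
    by simp
  also have "\<dots> \<le> (\<Sum>x\<in>words n. prod_list (map P x) * real (count_list (zip x (\<phi> x)) v))"
    using assms by (intro member_le_sum mult_nonneg_nonneg prod_list_nonneg) (auto intro: less_imp_le)
  finally show ?thesis using assms(2) by (simp add: pair_type_def)
qed

lemma pair_type_fst_marginal:
  assumes P: "is_distr P" and "0 < n" and len: "\<And>x. x \<in> words n \<Longrightarrow> length (\<phi> x) = n"
  shows "(\<Sum>b\<in>UNIV. pair_type P n \<phi> (a, b)) = P a"
proof -
  define ind where "ind a' = (of_bool (a' = a) :: real)" for a'
  have "real n * (\<Sum>v\<in>UNIV. pair_type P n \<phi> v * ind (fst v))
      = (\<Sum>x\<in>words n. prod_list (map P x) * sum_list (map ind x))"
    unfolding sum_words_sum_list_zip[OF \<open>0 < n\<close>, symmetric]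
  proof (intro sum.cong refl arg_cong[where f = "\<lambda>t. _ * t"])
    have "length x = length y \<Longrightarrow> (\<Sum>v\<leftarrow>zip x y. ind (fst v)) = sum_list (map ind x)" for x y :: "'a list"
      by (induction x y rule: list_induct2) auto
    then show "(\<Sum>v\<leftarrow>zip x (\<phi> x). ind (fst v)) = sum_list (map ind x)" if "x \<in> words n" for x
      using len[OF that] that by (simp add: words_def)
  qed
  also have "\<dots> = real n * P a"
    using P by (simp add: sum_words_prod_list_sum_list is_distr_def ind_def)
  finally have "(\<Sum>v\<in>UNIV. pair_type P n \<phi> v * ind (fst v)) = P a"
    using \<open>0 < n\<close> by simp
  moreover have "(\<Sum>v\<in>UNIV. pair_type P n \<phi> v * ind (fst v))
      = (\<Sum>a'\<in>UNIV. ind a' * (\<Sum>b\<in>UNIV. pair_type P n \<phi> (a', b)))"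
    by (simp add: sum_UNIV_pair sum_distrib_left mult.commute)
  ultimately show ?thesis
    by (simp add: ind_def)
qed

lemma is_distr_pair_type:
  assumes "is_distr P" "0 < n" "\<And>x. x \<in> words n \<Longrightarrow> length (\<phi> x) = n"
  shows "is_distr (pair_type P n \<phi>)"
  using assms pair_type_nonneg[of P]
  by (simp add: is_distr_def sum_UNIV_pair pair_type_fst_marginal)

lemma is_distr_snd_marginal:
  assumes "is_distr W"
  shows "is_distr (snd_marginal W)"
proof -
  have "(\<Sum>b\<in>UNIV. snd_marginal W b) = (\<Sum>a\<in>UNIV. \<Sum>b\<in>UNIV. W (a, b))"
    unfolding snd_marginal_def by (rule sum.swap)
  also have "\<dots> = (\<Sum>v\<in>UNIV. W v)"
    by (rule sum_UNIV_pair[symmetric])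
  finally have "(\<Sum>b\<in>UNIV. snd_marginal W b) = (\<Sum>v\<in>UNIV. W v)" .
  with assms show ?thesis
    by (simp add: is_distr_def snd_marginal_def sum_nonneg)
qed

lemma le_snd_marginal: "(\<And>v. 0 \<le> W v) \<Longrightarrow> W (a, b) \<le> snd_marginal W b"
  unfolding snd_marginal_def by (rule member_le_sum) auto

lemma snd_conditional_nonneg: "(\<And>v. 0 \<le> W v) \<Longrightarrow> 0 \<le> snd_conditional W a b"
  unfolding snd_conditional_def snd_marginal_def by (intro divide_nonneg_nonneg sum_nonneg) auto

lemma sum_snd_conditional_le_one: "(\<Sum>a\<in>UNIV. snd_conditional W a b) \<le> 1"
proof -
  have "(\<Sum>a\<in>UNIV. snd_conditional W a b) = snd_marginal W b / snd_marginal W b"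
    by (simp add: snd_conditional_def snd_marginal_def flip: sum_divide_distrib)
  then show ?thesis
    by simp
qed

lemma sum_list_rho_zip_self: "(\<Sum>s\<leftarrow>zip x x. rho (fst s) (snd s)) = 0"
  by (induction x) (simp_all add: rho_def)

lemma sum_list_rho_zip_le: "(\<Sum>s\<leftarrow>zip x y. rho (fst s) (snd s)) \<le> real (length (zip x y))"
  by (induction x y rule: list_induct2') (simp_all add: rho_def)

lemma pair_type_distortion_le:
  assumes "\<And>a. 0 \<le> P a" "0 < n" "C \<subseteq> words n" "\<And>x. x \<in> C \<Longrightarrow> \<phi> x = x"
    and len: "\<And>x. x \<in> words n \<Longrightarrow> length (\<phi> x) = n"
  shows "(\<Sum>s\<in>UNIV. pair_type P n \<phi> s * rho (fst s) (snd s)) \<le> prod_meas P (words n - C)"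
proof -
  have dist_le: "(\<Sum>s\<leftarrow>zip x (\<phi> x). rho (fst s) (snd s)) \<le> real n * of_bool (x \<notin> C)"
    if "x \<in> words n" for x
    using sum_list_rho_zip_self[of x] sum_list_rho_zip_le[of x "\<phi> x"] len[OF that] that assms(4)
    by (cases "x \<in> C") (simp_all add: words_def)
  have "real n * (\<Sum>s\<in>UNIV. pair_type P n \<phi> s * rho (fst s) (snd s))
      = (\<Sum>x\<in>words n. prod_list (map P x) * (\<Sum>s\<leftarrow>zip x (\<phi> x). rho (fst s) (snd s)))"
    by (rule sum_words_sum_list_zip[OF \<open>0 < n\<close>, symmetric])
  also have "\<dots> \<le> (\<Sum>x\<in>words n. prod_list (map P x) * (real n * of_bool (x \<notin> C)))"
    using assms(1) dist_le by (intro sum_mono mult_left_mono prod_list_nonneg) auto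
  also have "\<dots> = (\<Sum>x\<in>words n - C. prod_list (map P x) * real n)"
    by (rule sum.mono_neutral_cong_right) auto
  also have "\<dots> = real n * prod_meas P (words n - C)"
    by (simp add: prod_meas_def sum_distrib_left mult.commute)
  finally show ?thesis
    using \<open>0 < n\<close> by simp
qed

section \<open>The error exponent bounds the type II error\<close>

lemma prod_list_map_le_one:
  "(\<And>v. v \<in> set xs \<Longrightarrow> 0 \<le> f v \<and> f v \<le> (1 :: real)) \<Longrightarrow> prod_list (map f xs) \<le> 1"
  by (induction xs) (auto intro!: mult_le_one prod_list_nonneg)

lemma sum_words_kernel_le_prod_meas:
  fixes P :: "'a::finite \<Rightarrow> real" and K :: "'a \<Rightarrow> 'a \<Rightarrow> real"
  assumes P: "\<And>a. 0 \<le> P a" and K: "\<And>a b. 0 \<le> K a b" "\<And>b. (\<Sum>a\<in>UNIV. K a b) \<le> 1"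
    and C: "C \<subseteq> words n" and \<phi>: "\<And>x. x \<in> words n \<Longrightarrow> \<phi> x \<in> C"
  shows "(\<Sum>x\<in>words n. prod_list (map P (\<phi> x)) * prod_list (map (\<lambda>(a, b). K a b) (zip x (\<phi> x))))
       \<le> prod_meas P C"
proof -
  define k where "k x y = prod_list (map P y) * prod_list (map (\<lambda>(a, b). K a b) (zip x y))" for x y
  have "0 \<le> k x y" for x y
    using P K(1) by (auto simp: k_def intro!: mult_nonneg_nonneg prod_list_nonneg)
  moreover have "finite C"
    using C by (rule finite_subset) simp
  ultimately have "(\<Sum>x\<in>words n. k x (\<phi> x)) \<le> (\<Sum>x\<in>words n. \<Sum>y\<in>C. k x y)"
    using \<phi> by (intro sum_mono member_le_sum) auto
  also have "\<dots> = (\<Sum>y\<in>C. prod_list (map P y) * (\<Sum>x\<in>words n. prod_list (map (\<lambda>(a, b). K a b) (zip x y))))"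
    by (subst sum.swap) (simp add: k_def sum_distrib_left)
  also have "\<dots> = (\<Sum>y\<in>C. prod_list (map P y) * prod_list (map (\<lambda>b. \<Sum>a\<in>UNIV. K a b) y))"
  proof (intro sum.cong refl arg_cong[where f = "\<lambda>t. _ * t"])
    fix y
    assume "y \<in> C"
    with C have "length y = n"
      by (auto simp: words_def)
    then show "(\<Sum>x\<in>words n. prod_list (map (\<lambda>(a, b). K a b) (zip x y)))
             = prod_list (map (\<lambda>b. \<Sum>a\<in>UNIV. K a b) y)"
      by (rule sum_words_prod_list_zip)
  qed
  also have "\<dots> \<le> (\<Sum>y\<in>C. prod_list (map P y))"
    using P K by (intro sum_mono mult_left_le prod_list_map_le_one prod_list_nonneg conjI sum_nonneg) auto
  finally show ?thesis
    by (simp add: k_def prod_meas_def)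
qed

lemma relent_snd_marginal:
  fixes W :: "'a::finite \<times> 'b::finite \<Rightarrow> real"
  assumes W: "\<And>v. 0 \<le> W v" and P: "\<And>a. 0 < P a"
  shows "relent W (\<lambda>(a, b). P a * snd_marginal W b)
       = ereal (\<Sum>v\<in>UNIV. W v * ln (W v / (P (fst v) * snd_marginal W (snd v))))"
proof -
  have "0 < P a * snd_marginal W b" if "0 < W (a, b)" for a b
    using P[of a] le_snd_marginal[of W a b] W that by simp
  then have "\<not> (\<exists>v. 0 < W v \<and> (\<lambda>(a, b). P a * snd_marginal W b) v = 0)"
    by force
  then show ?thesis
    unfolding relent_def by (auto intro!: sum.cong simp: split_beta)
qed

lemma sum_ln_ratio_snd_marginal:
  fixes W :: "'a::finite \<times> 'b::finite \<Rightarrow> real"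
  assumes W: "\<And>v. 0 \<le> W v" and P1: "\<And>a. 0 < P1 a" and P2: "\<And>b. 0 < P2 b"
  defines "Q \<equiv> snd_marginal W"
  shows "(\<Sum>v\<in>UNIV. W v * ln (P2 (snd v) * snd_conditional W (fst v) (snd v) / P1 (fst v)))
       = (\<Sum>v\<in>UNIV. W v * ln (W v / (P1 (fst v) * Q (snd v)))) + (\<Sum>b\<in>UNIV. Q b * ln (P2 b))"
proof -
  have "W v * ln (P2 (snd v) * snd_conditional W (fst v) (snd v) / P1 (fst v))
      = W v * ln (W v / (P1 (fst v) * Q (snd v))) + W v * ln (P2 (snd v))" for v
  proof (cases "W v = 0")
    case False
    then have "0 < W v"
      using W[of v] by simp
    moreover have "W v \<le> Q (snd v)"
      using le_snd_marginal[of W "fst v" "snd v"] W by (simp add: Q_def)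
    ultimately show ?thesis
      using P1[of "fst v"] P2[of "snd v"]
      by (simp add: snd_conditional_def Q_def ln_div ln_mult_pos algebra_simps)
  qed simp
  moreover have "(\<Sum>v\<in>UNIV. W v * ln (P2 (snd v))) = (\<Sum>b\<in>UNIV. Q b * ln (P2 b))"
  proof -
    have "(\<Sum>v\<in>UNIV. W v * ln (P2 (snd v))) = (\<Sum>a\<in>UNIV. \<Sum>b\<in>UNIV. W (a, b) * ln (P2 b))"
      by (simp add: sum_UNIV_pair)
    also have "\<dots> = (\<Sum>b\<in>UNIV. \<Sum>a\<in>UNIV. W (a, b) * ln (P2 b))"
      by (rule sum.swap)
    finally show ?thesis
      by (simp add: Q_def snd_marginal_def sum_distrib_right)
  qed
  ultimately show ?thesis
    by (simp add: sum.distrib)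
qed

lemma sum_words_ln_prod_list_zip:
  fixes P g :: "_ \<Rightarrow> real"
  assumes "0 < n" and g: "\<And>x v. x \<in> words n \<Longrightarrow> v \<in> set (zip x (\<phi> x)) \<Longrightarrow> 0 < g v"
  shows "(\<Sum>x\<in>words n. prod_list (map P x) * ln (prod_list (map g (zip x (\<phi> x)))))
       = real n * (\<Sum>v\<in>UNIV. pair_type P n \<phi> v * ln (g v))"
proof -
  have "(\<Sum>x\<in>words n. prod_list (map P x) * ln (prod_list (map g (zip x (\<phi> x)))))
      = (\<Sum>x\<in>words n. prod_list (map P x) * (\<Sum>v\<leftarrow>zip x (\<phi> x). ln (g v)))"
    using g by (intro sum.cong refl) (simp add: ln_prod_list_map)
  also have "\<dots> = real n * (\<Sum>v\<in>UNIV. pair_type P n \<phi> v * ln (g v))"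
    using assms(1) by (rule sum_words_sum_list_zip)
  finally show ?thesis .
qed

lemma prod_list_zip_change_measure:
  fixes P1 P2 :: "'a \<Rightarrow> real"
  assumes "length x = length y" "\<And>a. P1 a \<noteq> 0"
  shows "prod_list (map P1 x) * prod_list (map (\<lambda>v. P2 (snd v) * K (fst v) (snd v) / P1 (fst v)) (zip x y))
       = prod_list (map P2 y) * prod_list (map (\<lambda>(a, b). K a b) (zip x y))"
  using assms by (induction x y rule: list_induct2) (simp_all add: field_simps)

lemma ln_prod_meas_ge_pair_type:
  fixes P1 P2 :: "'a::finite \<Rightarrow> real"
  assumes P1: "is_distr P1" "\<And>a. 0 < P1 a" and P2: "\<And>a. 0 < P2 a"
    and "0 < n" and C: "C \<subseteq> words n" and \<phi>: "\<And>x. x \<in> words n \<Longrightarrow> \<phi> x \<in> C"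
  defines "W \<equiv> pair_type P1 n \<phi>" and "Q \<equiv> snd_marginal (pair_type P1 n \<phi>)"
  shows "real n * ((\<Sum>v\<in>UNIV. W v * ln (W v / (P1 (fst v) * Q (snd v)))) + (\<Sum>b\<in>UNIV. Q b * ln (P2 b)))
       \<le> ln (prod_meas P2 C)"
proof -
  define K where "K = snd_conditional W"
  define g where "g v = P2 (snd v) * K (fst v) (snd v) / P1 (fst v)" for v
  define p where "p x = prod_list (map P1 x)" for x
  define r where "r x = p x * prod_list (map g (zip x (\<phi> x)))" for x
  have W_nonneg: "0 \<le> W v" for v
    using P1(2) by (simp add: W_def pair_type_nonneg less_imp_le)
  have p_pos: "0 < p x" for x
    using P1(2) by (simp add: p_def prod_list_map_pos)
  have g_pos: "0 < g v" if "x \<in> words n" "v \<in> set (zip x (\<phi> x))" for x v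
  proof -
    have "0 < W v"
      using pair_type_pos[of P1 n x v \<phi>] P1(2) \<open>0 < n\<close> that by (simp add: W_def)
    moreover have "W v \<le> snd_marginal W (snd v)"
      using le_snd_marginal[of W "fst v" "snd v"] W_nonneg by simp
    ultimately show ?thesis
      using P1(2) P2 by (simp add: g_def K_def snd_conditional_def)
  qed
  have r_pos: "0 < r x" if "x \<in> words n" for x
    using p_pos g_pos[OF that] by (simp add: r_def prod_list_map_pos)
  \<comment> \<open>\<open>K\<close> is a stochastic kernel from \<open>\<phi> x\<close> back to \<open>x\<close>, so \<open>r\<close> has mass at most \<open>P2\<^sup>n(C)\<close>.\<close>
  have "(\<Sum>x\<in>words n. r x)
      = (\<Sum>x\<in>words n. prod_list (map P2 (\<phi> x)) * prod_list (map (\<lambda>(a, b). K a b) (zip x (\<phi> x))))"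
  proof (intro sum.cong refl)
    fix x :: "'a list"
    assume "x \<in> words n"
    then have "length x = length (\<phi> x)"
      using C \<phi>[of x] by (auto simp: words_def)
    with P1(2) show "r x = prod_list (map P2 (\<phi> x)) * prod_list (map (\<lambda>(a, b). K a b) (zip x (\<phi> x)))"
      unfolding r_def p_def g_def by (intro prod_list_zip_change_measure) (auto simp: less_le)
  qed
  also have "\<dots> \<le> prod_meas P2 C"
    unfolding K_def using P2 W_nonneg C \<phi>
    by (intro sum_words_kernel_le_prod_meas snd_conditional_nonneg sum_snd_conditional_le_one)
      (auto intro: less_imp_le)
  finally have "ln (\<Sum>x\<in>words n. r x) \<le> ln (prod_meas P2 C)"
    using r_pos by (intro ln_mono sum_pos) auto
  moreover have "(\<Sum>x\<in>words n. p x * ln (r x / p x)) \<le> ln (\<Sum>x\<in>words n. r x)"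
    using P1(1) p_pos r_pos by (intro gibbs_inequality) (simp_all add: p_def sum_words_prod_list is_distr_def)
  moreover have "(\<Sum>x\<in>words n. p x * ln (r x / p x)) = real n * (\<Sum>v\<in>UNIV. W v * ln (g v))"
  proof -
    have "(\<Sum>x\<in>words n. p x * ln (r x / p x))
        = (\<Sum>x\<in>words n. p x * ln (prod_list (map g (zip x (\<phi> x)))))"
      using p_pos[THEN less_imp_neq] by (simp add: r_def)
    also have "\<dots> = real n * (\<Sum>v\<in>UNIV. W v * ln (g v))"
      unfolding W_def p_def using \<open>0 < n\<close> g_pos by (rule sum_words_ln_prod_list_zip)
    finally show ?thesis .
  qed
  moreover have "(\<Sum>v\<in>UNIV. W v * ln (g v))
      = (\<Sum>v\<in>UNIV. W v * ln (W v / (P1 (fst v) * Q (snd v)))) + (\<Sum>b\<in>UNIV. Q b * ln (P2 b))"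
    unfolding g_def K_def Q_def W_def using W_nonneg P1(2) P2
    by (intro sum_ln_ratio_snd_marginal) (auto simp: W_def)
  ultimately show ?thesis
    by simp
qed

lemma pair_type_mem_couplings:
  assumes P: "is_distr P" and "0 < n" "C \<subseteq> words n" "\<And>x. x \<in> C \<Longrightarrow> \<phi> x = x"
    and len: "\<And>x. x \<in> words n \<Longrightarrow> length (\<phi> x) = n"
  shows "pair_type P n \<phi> \<in> couplings P (snd_marginal (pair_type P n \<phi>)) (prod_meas P (words n - C))"
proof -
  have "0 \<le> P a" for a
    using P by (simp add: is_distr_def)
  then have "(\<Sum>s\<in>UNIV. pair_type P n \<phi> s * rho (fst s) (snd s)) \<le> prod_meas P (words n - C)"
    using assms by (intro pair_type_distortion_le)
  then show ?thesis
    using is_distr_pair_type[OF P \<open>0 < n\<close> len] pair_type_fst_marginal[OF P \<open>0 < n\<close> len]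
    by (simp add: couplings_def snd_marginal_def)
qed

lemma Rfun_le_relent:
  assumes "W \<in> couplings P1 Q D" "is_distr Q"
  shows "Rfun D P1 P2 \<le> relent W (\<lambda>(a, b). P1 a * Q b) + ereal (\<Sum>b\<in>UNIV. Q b * ln (P2 b))"
proof -
  have "Rfun D P1 P2 \<le> Ifun P1 Q D + ereal (\<Sum>b\<in>UNIV. Q b * ln (P2 b))"
    unfolding Rfun_def using assms(2) by (intro INF_lower) simp
  also have "Ifun P1 Q D \<le> relent W (\<lambda>(a, b). P1 a * Q b)"
    unfolding Ifun_def using assms(1) by (rule INF_lower)
  finally show ?thesis
    by (simp add: add_right_mono)
qed

lemma ln_prod_meas_ge_err_exp:
  fixes P1 P2 :: "'a::finite \<Rightarrow> real"
  assumes P1: "is_distr P1" "\<And>a. 0 < P1 a" and P2: "\<And>a. 0 < P2 a"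
    and "0 < n" and C: "C \<subseteq> words n" "C \<noteq> {}"
  shows "- ereal (real n) * err_exp P1 P2 (prod_meas P1 (words n - C)) \<le> ereal (ln (prod_meas P2 C))"
proof -
  obtain c where c: "c \<in> C"
    using C(2) by blast
  define \<phi> where "\<phi> x = (if x \<in> C then x else c)" for x
  define W where "W = pair_type P1 n \<phi>"
  define Q where "Q = snd_marginal W"
  define \<alpha> where "\<alpha> = prod_meas P1 (words n - C)"
  define KL where "KL = (\<Sum>v\<in>UNIV. W v * ln (W v / (P1 (fst v) * Q (snd v))))"
  define E where "E = (\<Sum>b\<in>UNIV. Q b * ln (P2 b))"
  have \<phi>_in: "\<phi> x \<in> C" for x
    using c by (simp add: \<phi>_def)
  have len: "length (\<phi> x) = n" for x
    using C(1) \<phi>_in[of x] by (auto simp: words_def)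
  have W_distr: "is_distr W"
    unfolding W_def using P1(1) \<open>0 < n\<close> len by (rule is_distr_pair_type)
  have "W \<in> couplings P1 Q \<alpha>"
    unfolding W_def Q_def \<alpha>_def using P1(1) \<open>0 < n\<close> C(1) len
    by (intro pair_type_mem_couplings) (auto simp: \<phi>_def)
  then have "Rfun \<alpha> P1 P2 \<le> relent W (\<lambda>(a, b). P1 a * Q b) + ereal E"
    unfolding E_def Q_def using is_distr_snd_marginal[OF W_distr] by (rule Rfun_le_relent)
  also have "relent W (\<lambda>(a, b). P1 a * Q b) = ereal KL"
    unfolding KL_def Q_def using W_distr P1(2) by (intro relent_snd_marginal) (auto simp: is_distr_def)
  finally have "Rfun \<alpha> P1 P2 \<le> ereal (KL + E)"
    by simp
  then have "ereal (real n) * Rfun \<alpha> P1 P2 \<le> ereal (real n * (KL + E))"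
    using ereal_mult_left_mono[of "Rfun \<alpha> P1 P2" "ereal (KL + E)" "ereal (real n)"] by simp
  also have "ereal (real n * (KL + E)) \<le> ereal (ln (prod_meas P2 C))"
    unfolding KL_def E_def Q_def W_def ereal_less_eq using P1 P2 \<open>0 < n\<close> C(1) \<phi>_in
    by (intro ln_prod_meas_ge_pair_type) auto
  finally have "ereal (real n) * Rfun \<alpha> P1 P2 \<le> ereal (ln (prod_meas P2 C))" .
  moreover have "- ereal (real n) * err_exp P1 P2 \<alpha> = ereal (real n) * Rfun \<alpha> P1 P2"
    by (simp only: err_exp_def ereal_mult_minus_left ereal_mult_minus_right ereal_uminus_uminus)
  ultimately show ?thesis
    by (simp add: \<alpha>_def)
qed

section \<open>Stein's lemma\<close>

definition llr :: "('a \<Rightarrow> real) \<Rightarrow> ('a \<Rightarrow> real) \<Rightarrow> 'a \<Rightarrow> real" where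
  "llr P1 P2 a = ln (P1 a) - ln (P2 a)"

definition llr_mean :: "('a::finite \<Rightarrow> real) \<Rightarrow> ('a \<Rightarrow> real) \<Rightarrow> real" where
  "llr_mean P1 P2 = (\<Sum>a\<in>UNIV. P1 a * llr P1 P2 a)"

definition llr_var :: "('a::finite \<Rightarrow> real) \<Rightarrow> ('a \<Rightarrow> real) \<Rightarrow> real" where
  "llr_var P1 P2 = (\<Sum>a\<in>UNIV. P1 a * (llr P1 P2 a - llr_mean P1 P2)\<^sup>2)"

definition typical_set :: "('a::finite \<Rightarrow> real) \<Rightarrow> ('a \<Rightarrow> real) \<Rightarrow> real \<Rightarrow> nat \<Rightarrow> 'a list set" where
  "typical_set P1 P2 e n =
     {x \<in> words n. \<bar>sum_list (map (llr P1 P2) x) - real n * llr_mean P1 P2\<bar> \<le> real n * e}"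

lemma relent_eq_llr_mean:
  assumes "\<And>a. 0 < P1 a" "\<And>a. 0 < P2 a"
  shows "relent P1 P2 = ereal (llr_mean P1 P2)"
proof -
  have "\<not> (\<exists>a. 0 < P1 a \<and> P2 a = 0)"
    using assms(2) by (metis less_irrefl)
  moreover have "(if P1 a = 0 then 0 else P1 a * ln (P1 a / P2 a)) = P1 a * llr P1 P2 a" for a
    using assms[of a] by (simp add: llr_def ln_div)
  ultimately show ?thesis
    unfolding relent_def llr_mean_def by simp
qed

lemma typical_set_subset_words: "typical_set P1 P2 e n \<subseteq> words n"
  by (auto simp: typical_set_def)

lemma finite_typical_set [simp]: "finite (typical_set P1 P2 e n)"
  by (rule finite_subset[OF typical_set_subset_words]) simp

lemma prod_meas_not_typical_le:
  fixes P1 P2 :: "'a::finite \<Rightarrow> real"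
  assumes P1: "is_distr P1" and "0 < e" "0 < n"
  shows "prod_meas P1 (words n - typical_set P1 P2 e n) \<le> llr_var P1 P2 / (real n * e\<^sup>2)"
proof -
  define dev where "dev x = (sum_list (map (llr P1 P2) x) - real n * llr_mean P1 P2)\<^sup>2 / (real n * e)\<^sup>2" for x
  have p_nonneg: "0 \<le> prod_list (map P1 x)" for x
    using P1 by (intro prod_list_nonneg) (auto simp: is_distr_def)
  have "1 \<le> dev x" if "x \<in> words n - typical_set P1 P2 e n" for x
  proof -
    have "real n * e < \<bar>sum_list (map (llr P1 P2) x) - real n * llr_mean P1 P2\<bar>"
      using that by (auto simp: typical_set_def)
    then have "(real n * e)\<^sup>2 \<le> (sum_list (map (llr P1 P2) x) - real n * llr_mean P1 P2)\<^sup>2"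
      using \<open>0 < e\<close> \<open>0 < n\<close> by (metis abs_le_square_iff abs_of_pos less_imp_le zero_less_mult_iff of_nat_0_less_iff)
    then show ?thesis
      using \<open>0 < e\<close> \<open>0 < n\<close> by (simp add: dev_def)
  qed
  then have "prod_meas P1 (words n - typical_set P1 P2 e n)
      \<le> (\<Sum>x\<in>words n - typical_set P1 P2 e n. prod_list (map P1 x) * dev x)"
    unfolding prod_meas_def using p_nonneg by (intro sum_mono) (metis mult.right_neutral mult_left_mono)
  also have "\<dots> \<le> (\<Sum>x\<in>words n. prod_list (map P1 x) * dev x)"
    using p_nonneg by (intro sum_mono2) (auto simp: dev_def)
  also have "\<dots> = real n * llr_var P1 P2 / (real n * e)\<^sup>2"
    using sum_words_prod_list_centered_sq[of P1 "llr P1 P2" n] P1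
    by (simp add: dev_def is_distr_def llr_mean_def llr_var_def mult.assoc flip: sum_divide_distrib)
  also have "\<dots> = llr_var P1 P2 / (real n * e\<^sup>2)"
    using \<open>0 < n\<close> by (simp add: power2_eq_square)
  finally show ?thesis .
qed

lemma prod_list_eq_exp_llr:
  assumes "\<And>a. 0 < P1 a" "\<And>a. 0 < P2 a"
  shows "prod_list (map P2 x) = prod_list (map P1 x) * exp (- sum_list (map (llr P1 P2) x))"
proof (induction x)
  case (Cons a x)
  have "P2 a = P1 a * exp (- llr P1 P2 a)"
    using assms[of a] by (simp add: llr_def exp_diff)
  with Cons show ?case
    by (simp add: exp_add[symmetric] algebra_simps exp_minus_inverse)
qed simp

lemma prod_meas_typical_bounds:
  fixes P1 P2 :: "'a::finite \<Rightarrow> real"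
  assumes "\<And>a. 0 < P1 a" "\<And>a. 0 < P2 a" and S: "S \<subseteq> typical_set P1 P2 e n"
  shows "exp (- (real n * (llr_mean P1 P2 + e))) * prod_meas P1 S \<le> prod_meas P2 S"
    and "prod_meas P2 S \<le> exp (- (real n * (llr_mean P1 P2 - e))) * prod_meas P1 S"
proof -
  have bounds: "exp (- (real n * (llr_mean P1 P2 + e))) * prod_list (map P1 x) \<le> prod_list (map P2 x)
      \<and> prod_list (map P2 x) \<le> exp (- (real n * (llr_mean P1 P2 - e))) * prod_list (map P1 x)"
    if "x \<in> typical_set P1 P2 e n" for x
  proof -
    have p: "0 \<le> prod_list (map P1 x)"
      using assms(1) by (intro prod_list_nonneg) (auto intro: less_imp_le)
    have "\<bar>sum_list (map (llr P1 P2) x) - real n * llr_mean P1 P2\<bar> \<le> real n * e"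
      using that by (simp add: typical_set_def)
    then have lo: "exp (- (real n * (llr_mean P1 P2 + e))) \<le> exp (- sum_list (map (llr P1 P2) x))"
      and hi: "exp (- sum_list (map (llr P1 P2) x)) \<le> exp (- (real n * (llr_mean P1 P2 - e)))"
      by (simp_all add: abs_le_iff algebra_simps)
    have "prod_list (map P2 x) = prod_list (map P1 x) * exp (- sum_list (map (llr P1 P2) x))"
      using assms(1,2) by (rule prod_list_eq_exp_llr)
    then show ?thesis
      using mult_left_mono[OF lo p] mult_left_mono[OF hi p] by (simp add: mult.commute)
  qed
  show "exp (- (real n * (llr_mean P1 P2 + e))) * prod_meas P1 S \<le> prod_meas P2 S"
    unfolding prod_meas_def sum_distrib_left using bounds S by (auto intro!: sum_mono)
  show "prod_meas P2 S \<le> exp (- (real n * (llr_mean P1 P2 - e))) * prod_meas P1 S"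
    unfolding prod_meas_def sum_distrib_left using bounds S by (auto intro!: sum_mono)
qed

lemma ln_prod_meas_ge_typical:
  fixes P1 P2 :: "'a::finite \<Rightarrow> real"
  assumes "\<And>a. 0 < P1 a" "\<And>a. 0 < P2 a" "0 < n" "0 < c"
    and S: "S \<subseteq> typical_set P1 P2 e n" "S \<subseteq> B" "finite B" and c: "c \<le> prod_meas P1 S"
  shows "- (llr_mean P1 P2 + e) + ln c / real n \<le> ln (prod_meas P2 B) / real n"
proof -
  define t where "t = exp (- (real n * (llr_mean P1 P2 + e)))"
  have "t * c \<le> t * prod_meas P1 S"
    using c by (simp add: t_def)
  also have "\<dots> \<le> prod_meas P2 S"
    unfolding t_def using assms(1,2) S(1) by (rule prod_meas_typical_bounds(1))
  also have "\<dots> \<le> prod_meas P2 B"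
    using assms(2) S(2,3) by (intro prod_meas_mono) (auto intro: less_imp_le)
  finally have "ln (t * c) \<le> ln (prod_meas P2 B)"
    using \<open>0 < c\<close> by (intro ln_mono) (simp_all add: t_def)
  then have "- (real n * (llr_mean P1 P2 + e)) + ln c \<le> ln (prod_meas P2 B)"
    using \<open>0 < c\<close> by (simp add: t_def ln_mult_pos)
  then have "(- (real n * (llr_mean P1 P2 + e)) + ln c) / real n \<le> ln (prod_meas P2 B) / real n"
    by (rule divide_right_mono) simp
  moreover have "(- (real n * (llr_mean P1 P2 + e)) + ln c) / real n = - (llr_mean P1 P2 + e) + ln c / real n"
    using \<open>0 < n\<close> by (simp add: field_simps)
  ultimately show ?thesis
    by simp
qed

lemma ln_prod_meas_le_typical:
  fixes P1 P2 :: "'a::finite \<Rightarrow> real"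
  assumes P1: "is_distr P1" "\<And>a. 0 < P1 a" and "\<And>a. 0 < P2 a" "0 < n"
    and S: "S \<subseteq> typical_set P1 P2 e n" and pos: "0 < prod_meas P2 S"
  shows "ln (prod_meas P2 S) / real n \<le> - (llr_mean P1 P2 - e)"
proof -
  have "prod_meas P1 S \<le> prod_meas P1 (words n)"
    using P1(2) S typical_set_subset_words[of P1 P2 e n] by (intro prod_meas_mono) (auto intro: less_imp_le)
  then have "prod_meas P1 S \<le> 1"
    using prod_meas_words[OF P1(1)] by simp
  then have "exp (- (real n * (llr_mean P1 P2 - e))) * prod_meas P1 S \<le> exp (- (real n * (llr_mean P1 P2 - e)))"
    by (intro mult_left_le) simp_all
  with prod_meas_typical_bounds(2)[OF P1(2) assms(3) S]
  have "prod_meas P2 S \<le> exp (- (real n * (llr_mean P1 P2 - e)))"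
    by (rule order.trans)
  then have "ln (prod_meas P2 S) \<le> - (real n * (llr_mean P1 P2 - e))"
    using pos by (metis ln_exp ln_mono)
  then have "ln (prod_meas P2 S) / real n \<le> - (real n * (llr_mean P1 P2 - e)) / real n"
    by (rule divide_right_mono) simp
  then show ?thesis
    using \<open>0 < n\<close> by simp
qed

text \<open>Any radius \<open>e n \<longlonglongrightarrow> 0\<close> with \<open>n * e n\<^sup>2 \<longlonglongrightarrow> \<infinity>\<close> would do; the second condition
  makes the Chebyshev bound on the atypical words vanish.\<close>

definition typical_radius :: "nat \<Rightarrow> real" where
  "typical_radius n = real n powr (-1/4)"

lemma typical_radius_tendsto: "typical_radius \<longlonglongrightarrow> 0"
  unfolding typical_radius_def by real_asymp

lemma prod_meas_not_typical_tendsto: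
  assumes "is_distr P1"
  shows "(\<lambda>n. prod_meas P1 (words n - typical_set P1 P2 (typical_radius n) n)) \<longlonglongrightarrow> 0"
proof (rule tendsto_sandwich[of "\<lambda>n. 0" _ _ "\<lambda>n. llr_var P1 P2 / (real n * (typical_radius n)\<^sup>2)"])
  have "(\<lambda>n. 1 / (real n * (typical_radius n)\<^sup>2)) \<longlonglongrightarrow> 0"
    unfolding typical_radius_def by real_asymp
  from tendsto_mult_right_zero[OF this, of "llr_var P1 P2"]
  show "(\<lambda>n. llr_var P1 P2 / (real n * (typical_radius n)\<^sup>2)) \<longlonglongrightarrow> 0"
    by simp
  show "\<forall>\<^sub>F n in sequentially. 0 \<le> prod_meas P1 (words n - typical_set P1 P2 (typical_radius n) n)"
    using assms by (intro always_eventually allI prod_meas_nonneg) (simp add: is_distr_def)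
  show "\<forall>\<^sub>F n in sequentially. prod_meas P1 (words n - typical_set P1 P2 (typical_radius n) n)
      \<le> llr_var P1 P2 / (real n * (typical_radius n)\<^sup>2)"
    using eventually_gt_at_top[of 0]
    by eventually_elim (use assms in \<open>auto intro!: prod_meas_not_typical_le simp: typical_radius_def\<close>)
qed simp

lemma prod_meas_Int_ge:
  assumes P: "is_distr P" and A: "A \<subseteq> words n"
  shows "1 - prod_meas P (words n - A) - prod_meas P (words n - B) \<le> prod_meas P (A \<inter> B)"
proof -
  have nonneg: "0 \<le> P a" for a
    using P by (simp add: is_distr_def)
  have fin: "finite (A \<inter> B)"
    using A by (auto intro: finite_subset)
  have "1 = prod_meas P (words n)"
    using prod_meas_words[OF P] by simp
  also have "\<dots> \<le> prod_meas P ((A \<inter> B) \<union> (words n - A) \<union> (words n - B))"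
    using fin by (intro prod_meas_mono nonneg) auto
  also have "\<dots> \<le> prod_meas P ((A \<inter> B) \<union> (words n - A)) + prod_meas P (words n - B)"
    using fin by (intro prod_meas_Un_le nonneg) auto
  also have "prod_meas P ((A \<inter> B) \<union> (words n - A)) \<le> prod_meas P (A \<inter> B) + prod_meas P (words n - A)"
    using fin by (intro prod_meas_Un_le nonneg) auto
  finally show ?thesis
    by simp
qed

lemma stein_converse:
  fixes P1 P2 :: "'a::finite \<Rightarrow> real" and C :: "nat \<Rightarrow> 'a list set"
  assumes P1: "is_distr P1" "\<And>a. 0 < P1 a" and P2: "\<And>a. 0 < P2 a"
    and C: "\<And>n. C n \<subseteq> words n" and err: "(\<lambda>n. prod_meas P1 (words n - C n)) \<longlonglongrightarrow> 0"
  shows "- relent P1 P2 \<le> liminf (\<lambda>n. ereal (ln (prod_meas P2 (C n)) / real n))"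
proof -
  define T where "T n = typical_set P1 P2 (typical_radius n) n" for n
  define lo where "lo n = - (llr_mean P1 P2 + typical_radius n) + ln (1/2) / real n" for n
  have "(\<lambda>n. prod_meas P1 (words n - C n) + prod_meas P1 (words n - T n)) \<longlonglongrightarrow> 0"
    using tendsto_add[OF err prod_meas_not_typical_tendsto[OF P1(1)]] by (simp add: T_def)
  then have "\<forall>\<^sub>F n in sequentially. prod_meas P1 (words n - C n) + prod_meas P1 (words n - T n) < 1/2"
    by (rule order_tendstoD(2)) simp
  then have "\<forall>\<^sub>F n in sequentially. prod_meas P1 (words n - C n) + prod_meas P1 (words n - T n) < 1/2 \<and> 0 < n"
    using eventually_gt_at_top[of 0] by (rule eventually_conj)
  then have "\<forall>\<^sub>F n in sequentially. ereal (lo n) \<le> ereal (ln (prod_meas P2 (C n)) / real n)"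
  proof eventually_elim
    case (elim n)
    then have "1/2 \<le> prod_meas P1 (C n \<inter> T n)"
      using prod_meas_Int_ge[OF P1(1) C, of n "T n"] by simp
    then have "lo n \<le> ln (prod_meas P2 (C n)) / real n"
      unfolding lo_def using elim C[of n]
      by (intro ln_prod_meas_ge_typical[OF P1(2) P2, where S = "C n \<inter> T n"]) (auto simp: T_def intro: finite_subset)
    then show ?case
      by simp
  qed
  then have "liminf (\<lambda>n. ereal (lo n)) \<le> liminf (\<lambda>n. ereal (ln (prod_meas P2 (C n)) / real n))"
    by (rule Liminf_mono)
  moreover have "lo \<longlonglongrightarrow> - llr_mean P1 P2"
    unfolding lo_def by (auto intro!: tendsto_eq_intros typical_radius_tendsto lim_const_over_n)
  then have "liminf (\<lambda>n. ereal (lo n)) = - relent P1 P2"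
    using relent_eq_llr_mean[of P1 P2, OF P1(2) P2] by (intro lim_imp_Liminf) simp_all
  ultimately show ?thesis
    by simp
qed

lemma ln_prod_meas_typical_tendsto:
  fixes P1 P2 :: "'a::finite \<Rightarrow> real"
  assumes P1: "is_distr P1" "\<And>a. 0 < P1 a" and P2: "\<And>a. 0 < P2 a"
  shows "(\<lambda>n. ln (prod_meas P2 (typical_set P1 P2 (typical_radius n) n)) / real n) \<longlonglongrightarrow> - llr_mean P1 P2"
proof -
  define T where "T n = typical_set P1 P2 (typical_radius n) n" for n
  define lo where "lo n = - (llr_mean P1 P2 + typical_radius n) + ln (1/2) / real n" for n
  define hi where "hi n = - (llr_mean P1 P2 - typical_radius n)" for n
  have "\<forall>\<^sub>F n in sequentially. prod_meas P1 (words n - T n) < 1/2"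
    using order_tendstoD(2)[OF prod_meas_not_typical_tendsto[OF P1(1)], of "1/2"] by (simp add: T_def)
  then have "\<forall>\<^sub>F n in sequentially. prod_meas P1 (words n - T n) < 1/2 \<and> 0 < n"
    using eventually_gt_at_top[of 0] by (rule eventually_conj)
  then have bounds: "\<forall>\<^sub>F n in sequentially.
      lo n \<le> ln (prod_meas P2 (T n)) / real n \<and> ln (prod_meas P2 (T n)) / real n \<le> hi n"
  proof eventually_elim
    case (elim n)
    have "prod_meas P1 (words n - T n) = prod_meas P1 (words n) - prod_meas P1 (T n)"
      unfolding T_def by (rule prod_meas_Diff[OF finite_words typical_set_subset_words])
    with elim have half: "1/2 \<le> prod_meas P1 (T n)"
      using prod_meas_words[OF P1(1)] by simp
    have lower: "lo n \<le> ln (prod_meas P2 (T n)) / real n"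
      unfolding lo_def by (rule ln_prod_meas_ge_typical[OF P1(2) P2]) (use elim half in \<open>simp_all add: T_def\<close>)
    have "exp (- (real n * (llr_mean P1 P2 + typical_radius n))) * prod_meas P1 (T n) \<le> prod_meas P2 (T n)"
      unfolding T_def by (rule prod_meas_typical_bounds(1)[OF P1(2) P2]) simp
    moreover have "0 < exp (- (real n * (llr_mean P1 P2 + typical_radius n))) * prod_meas P1 (T n)"
      using half by simp
    ultimately have "0 < prod_meas P2 (T n)"
      by linarith
    then have "ln (prod_meas P2 (T n)) / real n \<le> hi n"
      unfolding hi_def T_def using elim by (intro ln_prod_meas_le_typical[OF P1 P2]) (simp_all add: T_def)
    with lower show ?case
      by simp
  qed
  show ?thesis
  proof (rule tendsto_sandwich[of lo _ _ hi])
    show "\<forall>\<^sub>F n in sequentially. lo n \<le> ln (prod_meas P2 (typical_set P1 P2 (typical_radius n) n)) / real n"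
      using bounds by eventually_elim (simp add: T_def)
    show "\<forall>\<^sub>F n in sequentially. ln (prod_meas P2 (typical_set P1 P2 (typical_radius n) n)) / real n \<le> hi n"
      using bounds by eventually_elim (simp add: T_def)
    show "lo \<longlonglongrightarrow> - llr_mean P1 P2"
      unfolding lo_def by (auto intro!: tendsto_eq_intros typical_radius_tendsto lim_const_over_n)
    show "hi \<longlonglongrightarrow> - llr_mean P1 P2"
      unfolding hi_def by (auto intro!: tendsto_eq_intros typical_radius_tendsto)
  qed
qed

theorem corollary1:
  fixes P1 P2 :: "'a::finite \<Rightarrow> real"
  assumes "is_distr P1" and "is_distr P2"
    and "\<And>a. P1 a > 0" and "\<And>a. P2 a > 0"
  shows "(\<forall>(n::nat) (C::'a list set). n \<ge> 1 \<longrightarrow> C \<subseteq> words n \<longrightarrow> C \<noteq> {} \<longrightarrow>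
           - ereal (real n) * err_exp P1 P2 (prod_meas P1 (words n - C))
             \<le> ereal (ln (prod_meas P2 C)))
       \<and> (\<forall>C::nat \<Rightarrow> 'a list set. (\<forall>n. C n \<subseteq> words n) \<longrightarrow>
           (\<lambda>n. prod_meas P1 (words n - C n)) \<longlonglongrightarrow> 0 \<longrightarrow>
           liminf (\<lambda>n. ereal (ln (prod_meas P2 (C n)) / real n)) \<ge> - relent P1 P2)
       \<and> (\<exists>C::nat \<Rightarrow> 'a list set. (\<forall>n. C n \<subseteq> words n) \<and>
           (\<lambda>n. prod_meas P1 (words n - C n)) \<longlonglongrightarrow> 0 \<and>
           (\<lambda>n. ereal (ln (prod_meas P2 (C n)) / real n)) \<longlonglongrightarrow> - relent P1 P2)"
proof (intro conjI allI impI)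
  fix n :: nat and C :: "'a list set"
  assume "n \<ge> 1" "C \<subseteq> words n" "C \<noteq> {}"
  then show "- ereal (real n) * err_exp P1 P2 (prod_meas P1 (words n - C)) \<le> ereal (ln (prod_meas P2 C))"
    using assms(1,3,4) by (intro ln_prod_meas_ge_err_exp) auto
next
  fix C :: "nat \<Rightarrow> 'a list set"
  assume "\<forall>n. C n \<subseteq> words n" "(\<lambda>n. prod_meas P1 (words n - C n)) \<longlonglongrightarrow> 0"
  then show "liminf (\<lambda>n. ereal (ln (prod_meas P2 (C n)) / real n)) \<ge> - relent P1 P2"
    using assms(1,3,4) by (intro stein_converse) auto
next
  let ?T = "\<lambda>n. typical_set P1 P2 (typical_radius n) n"
  have "\<forall>n. ?T n \<subseteq> words n"
    by (simp add: typical_set_subset_words)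
  moreover have "(\<lambda>n. prod_meas P1 (words n - ?T n)) \<longlonglongrightarrow> 0"
    by (rule prod_meas_not_typical_tendsto[OF assms(1)])
  moreover have "(\<lambda>n. ereal (ln (prod_meas P2 (?T n)) / real n)) \<longlonglongrightarrow> - relent P1 P2"
    using ln_prod_meas_typical_tendsto[of P1 P2, OF assms(1,3,4)] relent_eq_llr_mean[of P1 P2, OF assms(3,4)]
    by simp
  ultimately show "\<exists>C::nat \<Rightarrow> 'a list set. (\<forall>n. C n \<subseteq> words n) \<and>
      (\<lambda>n. prod_meas P1 (words n - C n)) \<longlonglongrightarrow> 0 \<and>
      (\<lambda>n. ereal (ln (prod_meas P2 (C n)) / real n)) \<longlonglongrightarrow> - relent P1 P2"
    by (intro exI[of _ ?T] conjI)
qed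

end
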